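(* Let $(\varphi,\mathcal A,V)$ be a linear system with $\dim V=1$ (so $\varphi(a)$ is a scalar multiple of the identity for each $a$). Then the universal dilation of $(\varphi,\mathcal A,V)$ is equivalent to its principle (canonical) dilation if and only if $\ker\varphi$ contains no nonzero left ideal of $\mathcal A$.
   Context: Fix a field $\mathbb F$; all algebras and vector spaces are over $\mathbb F$, and $L(X)$ is the algebra of linear maps $X\to X$. A linear system $(\varphi,\mathcal A,V)$: $\mathcal A$ a unital associative algebra with unit $I$, $V$ a vector space, $\varphi:\mathcal A\to L(V)$ linear with $\varphi(I)=\mathrm{id}_V$. A homomorphism dilation system $(\pi,S,T,W)$: $W$ a vector space, $\pi:\mathcal A\to L(W)$ a unital homomorphism, $T:V\to W$ injective linear, $S:W\to V$ surjective linear, $\varphi(a)=S\pi(a)T$ for all $a$. Two linearly minimal systems (i.e. with $W=\mathrm{span}\{\pi(a)Tv\}$) are equivalent if there is a bijective linear $R:W_1\to W_2$ with $RT_1=T_2$, $S_2R=S_1$, $\pi_1(a)=R^{-1}\pi_2(a)R$ for all $a$. The universal dilation is $(\pi_u,S_u,T_u,\mathcal A\otimes V)$ with $\pi_u(a)(b\otimes x)=(ab)\otimes x$, $T_ux=I\otimes x$, $S_u(a\otimes x)=\varphi(a)x$. Canonical dilation: $\alpha_{a,x}\in L(\mathcal A,V)$, $\alpha_{a,x}(b)=\varphi(ba)x$; $W_c=\mathrm{span}\{\alpha_{a,x}\}$; $\pi_c(a)\alpha_{b,x}=\alpha_{ab,x}$; $T_cx=\alpha_{I,x}$; $S_c(\alpha_{a,x})=\varphi(a)x$.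 *)

theory Defs
  imports Main "HOL.Vector_Spaces" "HOL-Library.Function_Algebras"
begin

text \<open>A unital associative algebra over the field 'f: the ring_1 structure of 'a
  gives associativity and unit; sA is the scalar multiplication.\<close>
definition unital_algebra :: "('f::field \<Rightarrow> 'a::ring_1 \<Rightarrow> 'a) \<Rightarrow> bool" where
  "unital_algebra sA \<longleftrightarrow> vector_space sA \<and>
     (\<forall>c a b. sA c (a * b) = sA c a * b \<and> sA c (a * b) = a * sA c b)"

definition linear_system ::
  "('f::field \<Rightarrow> 'a::ring_1 \<Rightarrow> 'a) \<Rightarrow> ('f \<Rightarrow> 'v::ab_group_add \<Rightarrow> 'v) \<Rightarrow> ('a \<Rightarrow> 'v \<Rightarrow> 'v) \<Rightarrow> bool" where
  "linear_system sA sV phi \<longleftrightarrow> unital_algebra sA \<and> vector_space sV \<and>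
     (\<forall>a. Vector_Spaces.linear sV sV (phi a)) \<and>
     (\<forall>a b v. phi (a + b) v = phi a v + phi b v) \<and>
     (\<forall>c a v. phi (sA c a) v = sV c (phi a v)) \<and>
     phi 1 = id"

definition ker_phi :: "('a \<Rightarrow> 'v::zero \<Rightarrow> 'v) \<Rightarrow> 'a set" where
  "ker_phi phi = {a. \<forall>v. phi a v = 0}"

definition left_ideal :: "('f::field \<Rightarrow> 'a::ring_1 \<Rightarrow> 'a) \<Rightarrow> 'a set \<Rightarrow> bool" where
  "left_ideal sA J \<longleftrightarrow> module.subspace sA J \<and> (\<forall>a j. j \<in> J \<longrightarrow> a * j \<in> J)"

definition tensor_product ::
  "('f::field \<Rightarrow> 'a::ring_1 \<Rightarrow> 'a) \<Rightarrow> ('f \<Rightarrow> 'v::ab_group_add \<Rightarrow> 'v) \<Rightarrow> ('f \<Rightarrow> 'w::ab_group_add \<Rightarrow> 'w)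
    \<Rightarrow> ('a \<Rightarrow> 'v \<Rightarrow> 'w) \<Rightarrow> bool" where
  "tensor_product sA sV sW t \<longleftrightarrow> vector_space sW \<and>
     (\<forall>x. Vector_Spaces.linear sA sW (\<lambda>a. t a x)) \<and> (\<forall>a. Vector_Spaces.linear sV sW (t a)) \<and>
     module.span sW {t a x | a x. True} = UNIV \<and>
     (\<forall>\<beta> :: 'a \<Rightarrow> 'v \<Rightarrow> 'f.
        (\<forall>x. Vector_Spaces.linear sA (*) (\<lambda>a. \<beta> a x)) \<and> (\<forall>a. Vector_Spaces.linear sV (*) (\<beta> a)) \<longrightarrow>
        (\<exists>f. Vector_Spaces.linear sW (*) f \<and> (\<forall>a x. f (t a x) = \<beta> a x)))"

definition dilation_equiv ::
  "('f \<Rightarrow> 'w1::ab_group_add \<Rightarrow> 'w1) \<Rightarrow> 'w1 set \<Rightarrow> ('a \<Rightarrow> 'w1 \<Rightarrow> 'w1) \<Rightarrow> ('w1 \<Rightarrow> 'v) \<Rightarrow> ('v \<Rightarrow> 'w1)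
   \<Rightarrow> ('f \<Rightarrow> 'w2::ab_group_add \<Rightarrow> 'w2) \<Rightarrow> 'w2 set \<Rightarrow> ('a \<Rightarrow> 'w2 \<Rightarrow> 'w2) \<Rightarrow> ('w2 \<Rightarrow> 'v) \<Rightarrow> ('v \<Rightarrow> 'w2)
   \<Rightarrow> bool" where
  "dilation_equiv s1 W1 pi1 S1 T1 s2 W2 pi2 S2 T2 \<longleftrightarrow>
     (\<exists>R. bij_betw R W1 W2 \<and>
        (\<forall>u\<in>W1. \<forall>w\<in>W1. R (u + w) = R u + R w) \<and>
        (\<forall>c. \<forall>u\<in>W1. R (s1 c u) = s2 c (R u)) \<and>
        (\<forall>x. R (T1 x) = T2 x) \<and>
        (\<forall>w\<in>W1. S2 (R w) = S1 w) \<and>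
        (\<forall>a. \<forall>w\<in>W1. pi1 a w = inv_into W1 R (pi2 a (R w))))"

text \<open>Canonical (principal) dilation, living in L(A,V) = 'a \<Rightarrow> 'v.\<close>
definition fun_scale :: "('f \<Rightarrow> 'v \<Rightarrow> 'v) \<Rightarrow> 'f \<Rightarrow> ('a \<Rightarrow> 'v) \<Rightarrow> ('a \<Rightarrow> 'v)" where
  "fun_scale sV c f = (\<lambda>b. sV c (f b))"

definition canon_alpha :: "('a::times \<Rightarrow> 'v \<Rightarrow> 'v) \<Rightarrow> 'a \<Rightarrow> 'v \<Rightarrow> ('a \<Rightarrow> 'v)" where
  "canon_alpha phi a x = (\<lambda>b. phi (b * a) x)"

definition canon_space :: "('f::field \<Rightarrow> 'v::ab_group_add \<Rightarrow> 'v) \<Rightarrow> ('a::times \<Rightarrow> 'v \<Rightarrow> 'v) \<Rightarrow> ('a \<Rightarrow> 'v) set" where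
  "canon_space sV phi = module.span (fun_scale sV) {canon_alpha phi a x | a x. True}"

text \<open>pi_c(a) alpha_{b,x} = alpha_{ab,x}; linear extension: f \<mapsto> (b \<mapsto> f (b a)).\<close>
definition canon_pi :: "'a::times \<Rightarrow> ('a \<Rightarrow> 'v) \<Rightarrow> ('a \<Rightarrow> 'v)" where
  "canon_pi a f = (\<lambda>b. f (b * a))"

definition canon_T :: "('a::monoid_mult \<Rightarrow> 'v \<Rightarrow> 'v) \<Rightarrow> 'v \<Rightarrow> ('a \<Rightarrow> 'v)" where
  "canon_T phi x = canon_alpha phi 1 x"

text \<open>S_c alpha_{a,x} = phi(a) x = alpha_{a,x}(I); linear extension: f \<mapsto> f I.\<close>
definition canon_S :: "('a::one \<Rightarrow> 'v) \<Rightarrow> 'v" where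
  "canon_S f = f 1"

end

theory Submission
  imports Defs
begin

text \<open>Fix \<open>v\<^sub>0\<close> spanning \<open>V\<close>. Then \<open>a \<mapsto> a \<otimes> v\<^sub>0\<close> is a linear bijection \<open>\<A> \<rightarrow> \<A> \<otimes> V\<close>
  (injective since the functional \<open>\<mu> \<otimes> \<kappa>\<close> with \<open>\<mu> a = \<kappa> v\<^sub>0 = 1\<close> separates \<open>a \<otimes> v\<^sub>0\<close> from \<open>0\<close>), and
  the canonical space is the image of \<open>a \<mapsto> \<alpha>\<^sub>a\<^sub>,\<^sub>v\<^sub>0\<close>, whose kernel \<open>{a. \<phi>(\<A> a) = 0}\<close> is the largest
  left ideal inside \<open>ker \<phi>\<close>. If this kernel is trivial, \<open>a \<otimes> v\<^sub>0 \<mapsto> \<alpha>\<^sub>a\<^sub>,\<^sub>v\<^sub>0\<close> is an equivalence.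
  Conversely an equivalence maps \<open>\<pi>\<^sub>u(j)(I \<otimes> v\<^sub>0) = j \<otimes> v\<^sub>0\<close> to \<open>\<pi>\<^sub>c(j)\<alpha>\<^sub>I\<^sub>,\<^sub>v\<^sub>0 = \<alpha>\<^sub>j\<^sub>,\<^sub>v\<^sub>0\<close>, which
  vanishes for \<open>j\<close> in that ideal, forcing \<open>j = 0\<close>.\<close>

lemma (in vector_space) dim_one_generator:
  assumes "dim UNIV = 1"
  obtains v0 where "v0 \<noteq> 0" "\<forall>v. \<exists>c. v = scale c v0"
proof -
  obtain B where B: "independent B" "UNIV \<subseteq> span B" "card B = dim UNIV"
    using basis_exists[of UNIV] by blast
  then obtain v0 where "B = {v0}"
    using assms by (auto simp: card_Suc_eq)
  with B show thesis
    by (intro that[of v0]) (auto simp: span_singleton dest: dependent_zero)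
qed

lemma vector_space_field_mult: "vector_space ((*) :: 'f::field \<Rightarrow> 'f \<Rightarrow> 'f)"
  by unfold_locales (simp_all add: algebra_simps)

lemma (in vector_space) nonzero_functional:
  assumes "x \<noteq> 0"
  obtains f where "Vector_Spaces.linear scale (*) f" "f x = 1"
proof -
  interpret vector_space_pair scale "(*)"
    by (intro vector_space_pair.intro vector_space_axioms vector_space_field_mult)
  have "independent {x}"
    using assms by (simp add: independent_insert)
  then show thesis
    using linear_independent_extend[of "{x}" "\<lambda>_. 1"] that by auto
qed

lemma linear_mult_const:
  assumes "Vector_Spaces.linear s (*) f"
  shows "Vector_Spaces.linear s (*) (\<lambda>x. f x * c)"
  using assms unfolding linear_iff by (simp add: algebra_simps)

lemma linear_const_mult:
  assumes "Vector_Spaces.linear s (*) f"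
  shows "Vector_Spaces.linear s (*) (\<lambda>x. c * f x)"
  using assms unfolding linear_iff by (simp add: algebra_simps)

lemma linear_systemD:
  assumes "linear_system sA sV phi"
  shows "vector_space sA" "vector_space sV"
    and "sA c (a * b) = a * sA c b"
    and "phi (a + b) v = phi a v + phi b v"
    and "phi (sA c a) v = sV c (phi a v)"
    and "phi a (sV c v) = sV c (phi a v)"
  using assms unfolding linear_system_def unital_algebra_def linear_iff by blast+

lemma linear_system_phi_zero:
  assumes "linear_system sA sV phi"
  shows "phi 0 v = 0"
proof -
  interpret A: vector_space sA by (rule linear_systemD(1)[OF assms])
  interpret V: vector_space sV by (rule linear_systemD(2)[OF assms])
  have "phi 0 v = phi (sA 0 0) v" by simp
  also have "\<dots> = sV 0 (phi 0 v)" by (rule linear_systemD(5)[OF assms])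
  finally show ?thesis by simp
qed

definition left_core :: "('a::times \<Rightarrow> 'v::zero \<Rightarrow> 'v) \<Rightarrow> 'a set" where
  "left_core phi = {a. \<forall>b v. phi (b * a) v = 0}"

lemma left_ideal_left_core:
  assumes "linear_system sA sV phi"
  shows "left_ideal sA (left_core phi)"
proof -
  interpret A: vector_space sA by (rule linear_systemD(1)[OF assms])
  interpret V: vector_space sV by (rule linear_systemD(2)[OF assms])
  note phi = linear_systemD[OF assms]
  show ?thesis
    unfolding left_ideal_def left_core_def
  proof (intro conjI allI impI A.subspaceI)
    fix a c assume "a \<in> {a. \<forall>b v. phi (b * a) v = 0}"
    then show "sA c a \<in> {a. \<forall>b v. phi (b * a) v = 0}"
      by (simp add: phi(3)[symmetric] phi(5))
  qed (simp_all add: phi(4) linear_system_phi_zero[OF assms] distrib_left flip: mult.assoc)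
qed

lemma left_core_subset_ker_phi: "left_core phi \<subseteq> ker_phi (phi :: 'a::monoid_mult \<Rightarrow> _)"
  unfolding left_core_def ker_phi_def by (auto dest: spec[of _ 1])

lemma left_ideal_subset_left_core:
  assumes "left_ideal sA J" "J \<subseteq> ker_phi phi"
  shows "J \<subseteq> left_core phi"
  using assms unfolding left_ideal_def left_core_def ker_phi_def by blast

lemma no_left_ideal_in_ker_phi_iff:
  assumes "linear_system sA sV phi"
  shows "(\<nexists>J. left_ideal sA J \<and> J \<subseteq> ker_phi phi \<and> J \<noteq> {0}) \<longleftrightarrow> left_core phi = {0}"
proof -
  interpret A: vector_space sA by (rule linear_systemD(1)[OF assms])
  have zero_in: "0 \<in> J" if "left_ideal sA J" for J
    using that A.subspace_0 by (auto simp: left_ideal_def)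
  show ?thesis
  proof
    assume "\<nexists>J. left_ideal sA J \<and> J \<subseteq> ker_phi phi \<and> J \<noteq> {0}"
    then show "left_core phi = {0}"
      using left_ideal_left_core[OF assms] left_core_subset_ker_phi by blast
  next
    assume "left_core phi = {0}"
    then show "\<nexists>J. left_ideal sA J \<and> J \<subseteq> ker_phi phi \<and> J \<noteq> {0}"
      using left_ideal_subset_left_core zero_in by blast
  qed
qed

lemma tensor_product_scale_vector:
  assumes "tensor_product sA sV sW t"
  shows "t a (sV c x) = t (sA c a) x"
  using assms unfolding tensor_product_def linear_iff by simp

lemma tensor_product_universal:
  assumes "tensor_product sA sV sW t"
    and "\<And>y. Vector_Spaces.linear sA (*) (\<lambda>a. \<beta> a y)" "\<And>a. Vector_Spaces.linear sV (*) (\<beta> a)"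
  obtains f where "Vector_Spaces.linear sW (*) f" "\<And>a y. f (t a y) = \<beta> a y"
  using assms unfolding tensor_product_def by blast

lemma tensor_product_nonzero:
  assumes tens: "tensor_product sA sV sW t"
    and "vector_space sA" "vector_space sV" "a \<noteq> 0" "x \<noteq> 0"
  shows "t a x \<noteq> 0"
proof
  assume "t a x = 0"
  obtain \<mu> where \<mu>: "Vector_Spaces.linear sA (*) \<mu>" "\<mu> a = 1"
    using vector_space.nonzero_functional[OF \<open>vector_space sA\<close> \<open>a \<noteq> 0\<close>] by blast
  obtain \<kappa> where \<kappa>: "Vector_Spaces.linear sV (*) \<kappa>" "\<kappa> x = 1"
    using vector_space.nonzero_functional[OF \<open>vector_space sV\<close> \<open>x \<noteq> 0\<close>] by blast
  obtain f where f: "Vector_Spaces.linear sW (*) f" "\<And>b y. f (t b y) = \<mu> b * \<kappa> y"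
    using tensor_product_universal[OF tens linear_mult_const[OF \<mu>(1)] linear_const_mult[OF \<kappa>(1)]]
    by blast
  have "f (t a x) = 1"
    using f(2) \<mu>(2) \<kappa>(2) by simp
  moreover have "f 0 = 0"
    using f(1) tens unfolding tensor_product_def
    by (metis vector_space_pair.intro vector_space_pair.linear_0 vector_space_field_mult)
  ultimately show False
    using \<open>t a x = 0\<close> by simp
qed

lemma tensor_product_bij_generator:
  assumes tens: "tensor_product sA sV sW t"
    and "vector_space sA" "vector_space sV" "v0 \<noteq> 0"
    and gen: "\<forall>v. \<exists>c. v = sV c v0"
  shows "bij (\<lambda>a. t a v0)"
proof (rule bijI)
  have lin: "Vector_Spaces.linear sA sW (\<lambda>a. t a v0)"
    using tens by (simp add: tensor_product_def)
  interpret vector_space_pair sA sW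
    using lin by (simp add: linear_iff vector_space_pair.intro)
  show "inj (\<lambda>a. t a v0)"
    unfolding linear_inj_iff_eq_0[OF lin]
    using tensor_product_nonzero[OF tens \<open>vector_space sA\<close> \<open>vector_space sV\<close> _ \<open>v0 \<noteq> 0\<close>] by blast
  have "t a x \<in> range (\<lambda>a. t a v0)" for a x
  proof -
    obtain c where "x = sV c v0"
      using gen by blast
    then show ?thesis
      by (simp add: tensor_product_scale_vector[OF tens])
  qed
  then have "{t a x | a x. True} \<subseteq> range (\<lambda>a. t a v0)"
    by blast
  moreover have "vs2.subspace (range (\<lambda>a. t a v0))"
    by (rule linear_subspace_image[OF lin vs1.subspace_UNIV])
  ultimately have "vs2.span {t a x | a x. True} \<subseteq> range (\<lambda>a. t a v0)"
    by (rule vs2.span_minimal)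
  moreover have "vs2.span {t a x | a x. True} = UNIV"
    using tens by (simp add: tensor_product_def)
  ultimately show "surj (\<lambda>a. t a v0)"
    by auto
qed

lemma vector_space_fun_scale:
  assumes "vector_space sV"
  shows "vector_space (fun_scale sV :: 'f::field \<Rightarrow> ('a \<Rightarrow> 'v::ab_group_add) \<Rightarrow> 'a \<Rightarrow> 'v)"
proof -
  interpret vector_space sV by fact
  show ?thesis
    by unfold_locales (simp_all add: fun_scale_def fun_eq_iff scale_right_distrib scale_left_distrib)
qed

lemma canon_alpha_linear:
  assumes "linear_system sA sV phi"
  shows "Vector_Spaces.linear sA (fun_scale sV) (\<lambda>a. canon_alpha phi a x)"
  using linear_systemD(1,2)[OF assms] vector_space_fun_scale[of sV]
  by (simp add: linear_iff canon_alpha_def fun_scale_def plus_fun_def distrib_left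
      linear_systemD(4,5)[OF assms] flip: linear_systemD(3)[OF assms])

lemma canon_alpha_scale_vector:
  assumes "linear_system sA sV phi"
  shows "canon_alpha phi a (sV c x) = canon_alpha phi (sA c a) x"
  by (simp add: canon_alpha_def fun_eq_iff linear_systemD(5,6)[OF assms]
      flip: linear_systemD(3)[OF assms])

lemma canon_pi_canon_alpha:
  "canon_pi a (canon_alpha (phi :: 'a::semigroup_mult \<Rightarrow> _) b x) = canon_alpha phi (a * b) x"
  by (simp add: canon_pi_def canon_alpha_def mult.assoc)

lemma canon_alpha_eq_0_iff:
  assumes sys: "linear_system sA sV phi" and gen: "\<forall>v. \<exists>c. v = sV c v0"
  shows "canon_alpha phi a v0 = 0 \<longleftrightarrow> a \<in> left_core phi"
proof
  interpret V: vector_space sV by (rule linear_systemD(2)[OF sys])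
  assume "canon_alpha phi a v0 = 0"
  then have zero: "phi (b * a) v0 = 0" for b
    unfolding canon_alpha_def by (metis zero_fun_def)
  show "a \<in> left_core phi"
    unfolding left_core_def
  proof (intro CollectI allI)
    fix b v
    obtain c where "v = sV c v0"
      using gen by blast
    then show "phi (b * a) v = 0"
      by (simp add: linear_systemD(6)[OF sys] zero)
  qed
qed (simp add: left_core_def canon_alpha_def zero_fun_def)

lemma canon_space_eq_range:
  fixes sA :: "'f::field \<Rightarrow> 'a::ring_1 \<Rightarrow> 'a" and sV :: "'f \<Rightarrow> 'v::ab_group_add \<Rightarrow> 'v"
  assumes sys: "linear_system sA sV phi" and gen: "\<forall>v. \<exists>c. v = sV c v0"
  shows "canon_space sV phi = range (\<lambda>a. canon_alpha phi a v0)"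
proof -
  interpret vector_space_pair sA "fun_scale sV :: 'f \<Rightarrow> ('a \<Rightarrow> 'v) \<Rightarrow> 'a \<Rightarrow> 'v"
    by (intro vector_space_pair.intro vector_space_fun_scale linear_systemD(1,2)[OF sys])
  let ?G = "{canon_alpha phi a x | a x. True}"
  have "canon_alpha phi a x \<in> range (\<lambda>a. canon_alpha phi a v0)" for a x
  proof -
    obtain c where "x = sV c v0"
      using gen by blast
    then show ?thesis
      by (simp add: canon_alpha_scale_vector[OF sys])
  qed
  then have "?G \<subseteq> range (\<lambda>a. canon_alpha phi a v0)"
    by blast
  moreover have "range (\<lambda>a. canon_alpha phi a v0) \<subseteq> vs2.span ?G"
    by (rule order.trans[OF _ vs2.span_superset]) blast
  moreover have "vs2.subspace (range (\<lambda>a. canon_alpha phi a v0))"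
    by (rule linear_subspace_image[OF canon_alpha_linear[OF sys] vs1.subspace_UNIV])
  ultimately show ?thesis
    unfolding canon_space_def by (rule vs2.span_subspace)
qed

lemma dilation_equiv_imp_left_core_trivial:
  fixes sV :: "'f::field \<Rightarrow> 'v::ab_group_add \<Rightarrow> 'v" and v0 :: 'v
  assumes sys: "linear_system sA sV phi" and tens: "tensor_product sA sV sW t"
    and piu_gen: "\<forall>a b x. piu a (t b x) = t (a * b) x" and "v0 \<noteq> 0"
    and "dilation_equiv sW UNIV piu Su (\<lambda>x. t 1 x)
           (fun_scale sV) (canon_space sV phi) canon_pi canon_S (canon_T phi)"
  shows "left_core phi = {0}"
proof -
  obtain R where "inj R" and R_add: "\<And>u w. R (u + w) = R u + R w"
    and R_T: "\<And>y. R (t 1 y) = canon_T phi y"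
    and R_pi: "\<And>a w. piu a w = inv_into UNIV R (canon_pi a (R w))"
    using assms(5) unfolding dilation_equiv_def bij_betw_def by blast
  have "j = 0" if "j \<in> left_core phi" for j
  proof -
    have "canon_pi j (R (t 1 v0)) = canon_alpha phi j v0"
      by (simp add: R_T canon_T_def canon_pi_canon_alpha)
    also have "\<dots> = R 0"
      using that R_add[of 0 0] by (simp add: canon_alpha_def left_core_def zero_fun_def)
    finally have "t j v0 = 0"
      using R_pi[of j "t 1 v0"] piu_gen \<open>inj R\<close> by simp
    then show "j = 0"
      using tensor_product_nonzero[OF tens linear_systemD(1,2)[OF sys] _ \<open>v0 \<noteq> 0\<close>] by blast
  qed
  moreover have "0 \<in> left_core phi"
    by (simp add: left_core_def linear_system_phi_zero[OF sys])
  ultimately show ?thesis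
    by blast
qed

lemma left_core_trivial_imp_dilation_equiv:
  fixes sA :: "'f::field \<Rightarrow> 'a::ring_1 \<Rightarrow> 'a" and sV :: "'f \<Rightarrow> 'v::ab_group_add \<Rightarrow> 'v"
    and sW :: "'f \<Rightarrow> 'w::ab_group_add \<Rightarrow> 'w"
  assumes sys: "linear_system sA sV phi" and tens: "tensor_product sA sV sW t"
    and piu_gen: "\<forall>a b x. piu a (t b x) = t (a * b) x"
    and Su_gen: "\<forall>a x. Su (t a x) = phi a x"
    and "v0 \<noteq> 0" and gen: "\<forall>v. \<exists>c. v = sV c v0"
    and core: "left_core phi = {0}"
  shows "dilation_equiv sW UNIV piu Su (\<lambda>x. t 1 x)
           (fun_scale sV) (canon_space sV phi) canon_pi canon_S (canon_T phi)"
proof -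
  define g where "g a = t a v0" for a
  define \<alpha> where "\<alpha> a = canon_alpha phi a v0" for a
  define R where "R = \<alpha> \<circ> inv g"
  have "bij g"
    unfolding g_def using tensor_product_bij_generator[OF tens linear_systemD(1,2)[OF sys]] assms
    by blast
  have "Vector_Spaces.linear sA sW g"
    unfolding g_def using tens by (simp add: tensor_product_def)
  then have g_add: "g (a + b) = g a + g b" and g_scale: "g (sA c a) = sW c (g a)" for a b c
    unfolding linear_iff by blast+
  have \<alpha>_lin: "Vector_Spaces.linear sA (fun_scale sV) \<alpha>"
    unfolding \<alpha>_def by (rule canon_alpha_linear[OF sys])
  interpret vector_space_pair sA "fun_scale sV :: 'f \<Rightarrow> ('a \<Rightarrow> 'v) \<Rightarrow> 'a \<Rightarrow> 'v"
    using \<alpha>_lin by (simp add: linear_iff vector_space_pair.intro)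
  have "inj \<alpha>"
    unfolding linear_inj_iff_eq_0[OF \<alpha>_lin] \<alpha>_def canon_alpha_eq_0_iff[OF sys gen] core by blast
  have piu_g: "piu a (g b) = g (a * b)" for a b
    using piu_gen by (simp add: g_def)
  have R_g: "R (g a) = \<alpha> a" for a
    using \<open>bij g\<close> by (simp add: R_def bij_is_inj)
  have onto: "\<exists>a. w = g a" for w
    by (rule surjD[OF bij_is_surj[OF \<open>bij g\<close>]])
  have "bij_betw R UNIV (canon_space sV phi)"
    unfolding R_def canon_space_eq_range[OF sys gen] \<alpha>_def[symmetric]
    by (rule bij_betw_trans[OF bij_imp_bij_inv[OF \<open>bij g\<close>] inj_on_imp_bij_betw[OF \<open>inj \<alpha>\<close>]])
  then have "inj R"
    by (simp add: bij_betw_def)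
  show ?thesis
    unfolding dilation_equiv_def
  proof (intro exI[of _ R] conjI ballI allI)
    show "bij_betw R UNIV (canon_space sV phi)"
      by fact
  next
    fix u w
    obtain a b where "u = g a" "w = g b"
      using onto by blast
    then show "R (u + w) = R u + R w"
      by (simp only: g_add[symmetric] R_g linear_add[OF \<alpha>_lin])
  next
    fix c u
    obtain a where "u = g a"
      using onto by blast
    then show "R (sW c u) = fun_scale sV c (R u)"
      by (simp only: g_scale[symmetric] R_g linear_scale[OF \<alpha>_lin])
  next
    fix x
    obtain c where "x = sV c v0"
      using gen by blast
    then show "R (t 1 x) = canon_T phi x"
      using R_g[of "sA c 1"]
      by (simp add: g_def \<alpha>_def canon_T_def tensor_product_scale_vector[OF tens]
          canon_alpha_scale_vector[OF sys])
  next
    fix w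
    obtain a where "w = g a"
      using onto by blast
    then show "canon_S (R w) = Su w"
      by (simp add: R_g \<alpha>_def canon_S_def canon_alpha_def) (simp add: g_def Su_gen)
  next
    fix a w
    obtain b where "w = g b"
      using onto by blast
    then have "canon_pi a (R w) = R (piu a w)"
      by (simp add: R_g piu_g \<alpha>_def canon_pi_canon_alpha)
    then show "piu a w = inv_into UNIV R (canon_pi a (R w))"
      using \<open>inj R\<close> by simp
  qed
qed

theorem corollary4p3:
  fixes sA :: "'f::field \<Rightarrow> 'a::ring_1 \<Rightarrow> 'a"
    and sV :: "'f \<Rightarrow> 'v::ab_group_add \<Rightarrow> 'v"
    and phi :: "'a \<Rightarrow> 'v \<Rightarrow> 'v"
    and sW :: "'f \<Rightarrow> 'w::ab_group_add \<Rightarrow> 'w"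
    and t :: "'a \<Rightarrow> 'v \<Rightarrow> 'w"
    and piu :: "'a \<Rightarrow> 'w \<Rightarrow> 'w"
    and Su :: "'w \<Rightarrow> 'v"
  assumes sys: "linear_system sA sV phi"
    and dimV: "vector_space.dim sV UNIV = 1"
    and tens: "tensor_product sA sV sW t"
    and piu_lin: "\<forall>a. Vector_Spaces.linear sW sW (piu a)"
    and piu_gen: "\<forall>a b x. piu a (t b x) = t (a * b) x"
    and Su_lin: "Vector_Spaces.linear sW sV Su"
    and Su_gen: "\<forall>a x. Su (t a x) = phi a x"
  shows "dilation_equiv sW UNIV piu Su (\<lambda>x. t 1 x)
           (fun_scale sV) (canon_space sV phi) canon_pi canon_S (canon_T phi)
         \<longleftrightarrow> \<not> (\<exists>J. left_ideal sA J \<and> J \<subseteq> ker_phi phi \<and> J \<noteq> {0})"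
proof -
  obtain v0 where "v0 \<noteq> 0" and gen: "\<forall>v. \<exists>c. v = sV c v0"
    using vector_space.dim_one_generator[OF linear_systemD(2)[OF sys] dimV] by blast
  show ?thesis
    unfolding no_left_ideal_in_ker_phi_iff[OF sys]
    using dilation_equiv_imp_left_core_trivial[OF sys tens piu_gen \<open>v0 \<noteq> 0\<close>]
      left_core_trivial_imp_dilation_equiv[OF sys tens piu_gen Su_gen \<open>v0 \<noteq> 0\<close> gen]
    by blast
qed

end
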